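(* (Subject reduction for NLPCF.) If $\Gamma;\Delta\vdash e:\tau$ and $e\rightsquigarrow e'$, then $\Gamma;\Delta\vdash e':\tau$.
   Context: NLPCF is LPCF extended with non-determinism. Types: $\tau ::= \mathsf{Nat}\mid\mathsf{Bool}\mid \tau\,\&\,\tau' \mid \tau\otimes\tau' \mid \tau\multimap\tau' \mid \tau\to\tau'\mid\mathsf{T}\tau$. Terms: $e ::= x \mid \mathtt{0},\mathtt{1},\dots \mid \mathtt{succ}\mid\mathtt{pred}\mid\mathtt{iszero} \mid \lambda x.e \mid e\,e' \mid \mathtt{true}\mid\mathtt{false} \mid \mathtt{if}\ e_1\ \mathtt{then}\ e_2\ \mathtt{else}\ e_3 \mid \langle e_1,e_2\rangle \mid \mathtt{proj}_i(e) \mid \mathtt{fix}_\tau \mid e_1\otimes e_2 \mid \mathtt{let}\ x\otimes y = e\ \mathtt{in}\ e' \mid \mathtt{val}(e)\mid \mathtt{bind}\ x\Leftarrow e\ \mathtt{in}\ e'\mid e\sqcap e'$, up to $\alpha$-equivalence, with capture-avoiding substitution. Typing judgements $\Gamma;\Delta\vdash e:\tau$ ($\Gamma$ non-linear, $\Delta$ linear environments, disjoint domains; $\Delta,\Delta'$ disjoint union): $\Gamma;\emptyset\vdash x:\tau$ if $x:\tau\in\Gamma$; $\Gamma;x:\tau\vdash x:\tau$ if $x\notin\Gamma$; $\Gamma;\emptyset\vdash\mathtt{fix}_\tau:(\tau\to\tau)\to\tau$; numerals $:\mathsf{Nat}$, $\mathtt{true},\mathtt{false}:\mathsf{Bool}$,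 $\mathtt{succ},\mathtt{pred}:\mathsf{Nat}\multimap\mathsf{Nat}$, $\mathtt{iszero}:\mathsf{Nat}\multimap\mathsf{Bool}$ (all with empty $\Delta$); from $\Gamma;\Delta\vdash e_1:\mathsf{Bool}$, $\Gamma;\Delta'\vdash e_2:\tau$, $\Gamma;\Delta'\vdash e_3:\tau$ infer $\Gamma;\Delta,\Delta'\vdash\mathtt{if}\ e_1\ \mathtt{then}\ e_2\ \mathtt{else}\ e_3:\tau$; from $\Gamma;\Delta\vdash e_i:\tau_i$ infer $\Gamma;\Delta\vdash\langle e_1,e_2\rangle:\tau_1\&\tau_2$; from $\Gamma;\Delta\vdash e:\tau_1\&\tau_2$ infer $\Gamma;\Delta\vdash\mathtt{proj}_i(e):\tau_i$; from $\Gamma;\Delta_i\vdash e_i:\tau_i$ infer $\Gamma;\Delta_1,\Delta_2\vdash e_1\otimes e_2:\tau_1\otimes\tau_2$; from $\Gamma;\Delta,x:\tau_1,y:\tau_2\vdash e:\tau$ and $\Gamma;\Delta'\vdash e':\tau_1\otimes\tau_2$ infer $\Gamma;\Delta,\Delta'\vdash\mathtt{let}\ x\otimes y=e'\ \mathtt{in}\ e:\tau$; from $\Gamma,x:\tau;\Delta\vdash e:\tau'$ infer $\Gamma;\Delta\vdash\lambda x.e:\tau\to\tau'$; from $\Gamma;\Delta\vdash e:\tau'\to\tau$, $\Gamma;\emptyset\vdash e':\tau'$ infer $\Gamma;\Delta\vdash e\,e':\tau$; from $\Gamma;\Delta,x:\tau\vdash e:\tau'$ infer $\Gamma;\Delta\vdash\lambda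 x.e:\tau\multimap\tau'$; from $\Gamma;\Delta\vdash e:\tau'\multimap\tau$, $\Gamma;\Delta'\vdash e':\tau'$ infer $\Gamma;\Delta,\Delta'\vdash e\,e':\tau$; from $\Gamma;\Delta\vdash e:\tau$ infer $\Gamma;\Delta\vdash\mathtt{val}(e):\mathsf{T}\tau$; from $\Gamma;\emptyset\vdash e_1:\mathsf{T}\tau_1$ and $\Gamma,x:\tau_1;\Delta\vdash e_2:\mathsf{T}\tau_2$ infer $\Gamma;\Delta\vdash\mathtt{bind}\ x\Leftarrow e_1\ \mathtt{in}\ e_2:\mathsf{T}\tau_2$; from $\Gamma;\Delta\vdash e_1:\mathsf{T}\tau_1$ and $\Gamma;\Delta',x:\tau_1\vdash e_2:\mathsf{T}\tau_2$ infer $\Gamma;\Delta,\Delta'\vdash\mathtt{bind}\ x\Leftarrow e_1\ \mathtt{in}\ e_2:\mathsf{T}\tau_2$; from $\Gamma;\Delta\vdash e_i:\mathsf{T}\tau$ ($i=1,2$) infer $\Gamma;\Delta\vdash e_1\sqcap e_2:\mathsf{T}\tau$. One-step reduction $\rightsquigarrow$: least relation containing $(\lambda x.e)e'\rightsquigarrow e[e'/x]$; $\mathtt{fix}_\tau\,e\rightsquigarrow e(\mathtt{fix}_\tau\,e)$; $\mathtt{succ}\,n\rightsquigarrow n+1$; $\mathtt{pred}\,0\rightsquigarrow0$; $\mathtt{pred}\,n\rightsquigarrow n-1$ ($n\ge1$); $\mathtt{iszero}\,0\rightsquigarrow\mathtt{true}$; $\mathtt{iszero}\,n\rightsquigarrow\mathtt{false}$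 ($n\ge1$); $\mathtt{if}\ \mathtt{true}\ \mathtt{then}\ e_1\ \mathtt{else}\ e_2\rightsquigarrow e_1$; $\mathtt{if}\ \mathtt{false}\ \mathtt{then}\ e_1\ \mathtt{else}\ e_2\rightsquigarrow e_2$; $\mathtt{proj}_i\langle e_1,e_2\rangle\rightsquigarrow e_i$; $\mathtt{let}\ x\otimes y=e_1\otimes e_2\ \mathtt{in}\ e\rightsquigarrow e[e_1/x,e_2/y]$; $\mathtt{bind}\ x\Leftarrow\mathtt{val}(e')\ \mathtt{in}\ e\rightsquigarrow(\lambda x.e)e'$ when $e'\not\rightsquigarrow$; $e_1\sqcap e_2\rightsquigarrow e_i$ ($i=1,2$); closed under $\mathcal{E}[e_1]\rightsquigarrow\mathcal{E}[e_2]$ for evaluation contexts $\mathcal{E}::=[\,]\mid\mathtt{succ}(\mathcal{E})\mid\mathtt{pred}(\mathcal{E})\mid\mathtt{iszero}(\mathcal{E})\mid\mathcal{E}\,e\mid\mathtt{if}\ \mathcal{E}\ \mathtt{then}\ e_1\ \mathtt{else}\ e_2\mid\mathtt{proj}_i(\mathcal{E})\mid\mathtt{let}\ x\otimes y=\mathcal{E}\ \mathtt{in}\ e\mid\mathtt{bind}\ x\Leftarrow\mathcal{E}\ \mathtt{in}\ e\mid\mathtt{val}(\mathcal{E})$. *)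

theory Defs
  imports Main
begin

datatype ty =
    TNat
  | TBool
  | With ty ty
  | Tensor ty ty
  | Lolli ty ty
  | Arrow ty ty
  | TMon ty

datatype trm =
    Var nat
  | Num nat
  | Succ
  | Pred
  | IsZero
  | Lam trm
  | App trm trm
  | TT
  | FF
  | If trm trm trm
  | Pair trm trm
  | Proj1 trm
  | Proj2 trm
  | Fix ty
  | Tens trm trm
  | LetTens trm trm         (* let x \<otimes> y = e' in e : LetTens e' e, x = index 1, y = index 0 in e *)
  | Val trm
  | Bind trm trm            (* bind x <= e1 in e2 : Bind e1 e2, x = index 0 in e2 *)
  | Choice trm trm

primrec lift :: "nat \<Rightarrow> trm \<Rightarrow> trm" where
  "lift k (Var i) = (if i < k then Var i else Var (Suc i))"
| "lift k (Num n) = Num n"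
| "lift k Succ = Succ"
| "lift k Pred = Pred"
| "lift k IsZero = IsZero"
| "lift k (Lam e) = Lam (lift (Suc k) e)"
| "lift k (App e1 e2) = App (lift k e1) (lift k e2)"
| "lift k TT = TT"
| "lift k FF = FF"
| "lift k (If e1 e2 e3) = If (lift k e1) (lift k e2) (lift k e3)"
| "lift k (Pair e1 e2) = Pair (lift k e1) (lift k e2)"
| "lift k (Proj1 e) = Proj1 (lift k e)"
| "lift k (Proj2 e) = Proj2 (lift k e)"
| "lift k (Fix t) = Fix t"
| "lift k (Tens e1 e2) = Tens (lift k e1) (lift k e2)"
| "lift k (LetTens e1 e2) = LetTens (lift k e1) (lift (Suc (Suc k)) e2)"
| "lift k (Val e) = Val (lift k e)"
| "lift k (Bind e1 e2) = Bind (lift k e1) (lift (Suc k) e2)"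
| "lift k (Choice e1 e2) = Choice (lift k e1) (lift k e2)"

text \<open>subst k s e = e[s/k], removing index k (indices above k are decremented).\<close>
primrec subst :: "nat \<Rightarrow> trm \<Rightarrow> trm \<Rightarrow> trm" where
  "subst k s (Var i) = (if i < k then Var i else if i = k then s else Var (i - 1))"
| "subst k s (Num n) = Num n"
| "subst k s Succ = Succ"
| "subst k s Pred = Pred"
| "subst k s IsZero = IsZero"
| "subst k s (Lam e) = Lam (subst (Suc k) (lift 0 s) e)"
| "subst k s (App e1 e2) = App (subst k s e1) (subst k s e2)"
| "subst k s TT = TT"
| "subst k s FF = FF"
| "subst k s (If e1 e2 e3) = If (subst k s e1) (subst k s e2) (subst k s e3)"
| "subst k s (Pair e1 e2) = Pair (subst k s e1) (subst k s e2)"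
| "subst k s (Proj1 e) = Proj1 (subst k s e)"
| "subst k s (Proj2 e) = Proj2 (subst k s e)"
| "subst k s (Fix t) = Fix t"
| "subst k s (Tens e1 e2) = Tens (subst k s e1) (subst k s e2)"
| "subst k s (LetTens e1 e2) = LetTens (subst k s e1) (subst (Suc (Suc k)) (lift 0 (lift 0 s)) e2)"
| "subst k s (Val e) = Val (subst k s e)"
| "subst k s (Bind e1 e2) = Bind (subst k s e1) (subst (Suc k) (lift 0 s) e2)"
| "subst k s (Choice e1 e2) = Choice (subst k s e1) (subst k s e2)"

definition ext :: "ty option \<Rightarrow> (nat \<rightharpoonup> ty) \<Rightarrow> (nat \<rightharpoonup> ty)" where
  "ext a G = (\<lambda>n. case n of 0 \<Rightarrow> a | Suc m \<Rightarrow> G m)"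

inductive typing :: "(nat \<rightharpoonup> ty) \<Rightarrow> (nat \<rightharpoonup> ty) \<Rightarrow> trm \<Rightarrow> ty \<Rightarrow> bool" where
  var_nl: "G x = Some t \<Longrightarrow> typing G Map.empty (Var x) t"
| var_l: "G x = None \<Longrightarrow> typing G [x \<mapsto> t] (Var x) t"
| fixT: "typing G Map.empty (Fix t) (Arrow (Arrow t t) t)"
| num: "typing G Map.empty (Num n) TNat"
| tt: "typing G Map.empty TT TBool"
| ff: "typing G Map.empty FF TBool"
| succ: "typing G Map.empty Succ (Lolli TNat TNat)"
| pred: "typing G Map.empty Pred (Lolli TNat TNat)"
| iszero: "typing G Map.empty IsZero (Lolli TNat TBool)"
| ifte: "\<lbrakk> typing G D e1 TBool; typing G D' e2 t; typing G D' e3 t; dom D \<inter> dom D' = {} \<rbrakk>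
         \<Longrightarrow> typing G (D ++ D') (If e1 e2 e3) t"
| pair: "\<lbrakk> typing G D e1 t1; typing G D e2 t2 \<rbrakk> \<Longrightarrow> typing G D (Pair e1 e2) (With t1 t2)"
| proj1: "typing G D e (With t1 t2) \<Longrightarrow> typing G D (Proj1 e) t1"
| proj2: "typing G D e (With t1 t2) \<Longrightarrow> typing G D (Proj2 e) t2"
| tens: "\<lbrakk> typing G D1 e1 t1; typing G D2 e2 t2; dom D1 \<inter> dom D2 = {} \<rbrakk>
         \<Longrightarrow> typing G (D1 ++ D2) (Tens e1 e2) (Tensor t1 t2)"
| lettens: "\<lbrakk> typing (ext None (ext None G)) (ext (Some t2) (ext (Some t1) D)) e t;
              typing G D' e' (Tensor t1 t2); dom D \<inter> dom D' = {} \<rbrakk>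
         \<Longrightarrow> typing G (D ++ D') (LetTens e' e) t"
| lam_nl: "typing (ext (Some t) G) (ext None D) e t' \<Longrightarrow> typing G D (Lam e) (Arrow t t')"
| app_nl: "\<lbrakk> typing G D e (Arrow t' t); typing G Map.empty e' t' \<rbrakk> \<Longrightarrow> typing G D (App e e') t"
| lam_l: "typing (ext None G) (ext (Some t) D) e t' \<Longrightarrow> typing G D (Lam e) (Lolli t t')"
| app_l: "\<lbrakk> typing G D e (Lolli t' t); typing G D' e' t'; dom D \<inter> dom D' = {} \<rbrakk>
         \<Longrightarrow> typing G (D ++ D') (App e e') t"
| val: "typing G D e t \<Longrightarrow> typing G D (Val e) (TMon t)"
| bind_nl: "\<lbrakk> typing G Map.empty e1 (TMon t1); typing (ext (Some t1) G) (ext None D) e2 (TMon t2) \<rbrakk>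
         \<Longrightarrow> typing G D (Bind e1 e2) (TMon t2)"
| bind_l: "\<lbrakk> typing G D e1 (TMon t1); typing (ext None G) (ext (Some t1) D') e2 (TMon t2);
             dom D \<inter> dom D' = {} \<rbrakk>
         \<Longrightarrow> typing G (D ++ D') (Bind e1 e2) (TMon t2)"
| choice: "\<lbrakk> typing G D e1 (TMon t); typing G D e2 (TMon t) \<rbrakk> \<Longrightarrow> typing G D (Choice e1 e2) (TMon t)"

datatype ectx =
    Hole
  | ESucc ectx
  | EPred ectx
  | EIsZero ectx
  | EApp ectx trm
  | EIf ectx trm trm
  | EProj1 ectx
  | EProj2 ectx
  | ELet ectx trm
  | EBind ectx trm
  | EVal ectx

primrec plug :: "ectx \<Rightarrow> trm \<Rightarrow> trm" where
  "plug Hole e = e"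
| "plug (ESucc E) e = App Succ (plug E e)"
| "plug (EPred E) e = App Pred (plug E e)"
| "plug (EIsZero E) e = App IsZero (plug E e)"
| "plug (EApp E e') e = App (plug E e) e'"
| "plug (EIf E e1 e2) e = If (plug E e) e1 e2"
| "plug (EProj1 E) e = Proj1 (plug E e)"
| "plug (EProj2 E) e = Proj2 (plug E e)"
| "plug (ELet E e') e = LetTens (plug E e) e'"
| "plug (EBind E e') e = Bind (plug E e) e'"
| "plug (EVal E) e = Val (plug E e)"

text \<open>The reduction rules, with the irreducibility side condition of the bind rule
  expressed relative to a parameter relation R.\<close>
inductive red_with :: "(trm \<Rightarrow> trm \<Rightarrow> bool) \<Rightarrow> trm \<Rightarrow> trm \<Rightarrow> bool" for R where
  beta: "red_with R (App (Lam e) e') (subst 0 e' e)"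
| fixT: "red_with R (App (Fix t) e) (App e (App (Fix t) e))"
| succ: "red_with R (App Succ (Num n)) (Num (Suc n))"
| pred0: "red_with R (App Pred (Num 0)) (Num 0)"
| predS: "n \<ge> 1 \<Longrightarrow> red_with R (App Pred (Num n)) (Num (n - 1))"
| iszero0: "red_with R (App IsZero (Num 0)) TT"
| iszeroS: "n \<ge> 1 \<Longrightarrow> red_with R (App IsZero (Num n)) FF"
| if_true: "red_with R (If TT e1 e2) e1"
| if_false: "red_with R (If FF e1 e2) e2"
| proj1: "red_with R (Proj1 (Pair e1 e2)) e1"
| proj2: "red_with R (Proj2 (Pair e1 e2)) e2"
| lettens: "red_with R (LetTens (Tens e1 e2) e) (subst 0 e2 (subst 1 (lift 0 e1) e))"
| bind: "\<not> (\<exists>e''. R e' e'') \<Longrightarrow> red_with R (Bind (Val e') e) (App (Lam e) e')"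
| choice1: "red_with R (Choice e1 e2) e1"
| choice2: "red_with R (Choice e1 e2) e2"
| ctx: "red_with R e1 e2 \<Longrightarrow> red_with R (plug E e1) (plug E e2)"

text \<open>The reduction relation is the (unique, stratified) relation with
  step = red_with step; the irreducibility test only concerns proper subterms of the
  redex, so it is defined by well-founded recursion on the size of the source term.\<close>
function step :: "trm \<Rightarrow> trm \<Rightarrow> bool" where
  "step e1 e2 = red_with (\<lambda>a b. if size a < size e1 then step a b else False) e1 e2"
  by auto
termination by (relation "measure (\<lambda>(a, b). size a)") auto

end

theory Submission
  imports Defs
begin

text \<open>
  Weakening and substitution are proved separately for the two kinds of variables. A non-linear
  variable may be used any number of times, so it is replaced by a term with empty linear
  environment, and every typing rule is preserved unchanged. A linear variable lies in exactly
  one part of each disjoint split of the linear environment (rules for \<open>if\<close>, \<open>\<otimes>\<close>,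
  \<open>let\<close>, linear application and linear \<open>bind\<close>); the substituted term's linear environment is
  merged into that part, while the other premise does not mention the variable at all.
  Every redex then reduces to these substitution lemmas: in particular
  \<open>bind x \<Leftarrow> val(e') in e\<close> is typed exactly like \<open>(\<lambda>x. e) e'\<close>, with the abstraction
  non-linear or linear according to the bind rule used.
\<close>

text \<open>\<open>env_insert k\<close> and \<open>env_delete k\<close> do to environments what \<open>lift k\<close> and \<open>subst k\<close>
  do to de Bruijn indices.\<close>

definition env_insert :: "nat \<Rightarrow> 'a option \<Rightarrow> (nat \<rightharpoonup> 'a) \<Rightarrow> (nat \<rightharpoonup> 'a)" where
  "env_insert k a M = (\<lambda>n. if n < k then M n else if n = k then a else M (n - 1))"

definition env_delete :: "nat \<Rightarrow> (nat \<rightharpoonup> 'a) \<Rightarrow> (nat \<rightharpoonup> 'a)" where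
  "env_delete k M = (\<lambda>n. if n < k then M n else M (Suc n))"

lemma ext_0 [simp]: "ext a M 0 = a"
  and ext_Suc [simp]: "ext a M (Suc n) = M n"
  by (simp_all add: ext_def)

lemma ext_None_empty [simp]: "ext None Map.empty = Map.empty"
  by (rule ext) (simp add: ext_def split: nat.split)

lemma ext_map_add: "ext a M1 ++ ext None M2 = ext a (M1 ++ M2)"
  by (rule ext) (simp add: ext_def map_add_def split: nat.split)

lemma dom_ext: "dom (ext a M) = (if a = None then {} else {0}) \<union> Suc ` dom M"
  by (rule set_eqI, case_tac x) auto

lemma dom_ext_disjoint_iff:
  "dom (ext a M1) \<inter> dom (ext b M2) = {} \<longleftrightarrow> (a = None \<or> b = None) \<and> dom M1 \<inter> dom M2 = {}"
  unfolding dom_ext by auto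

lemma env_insert_0: "env_insert 0 a M = ext a M"
  by (rule ext) (simp add: ext_def env_insert_def split: nat.split)

lemma ext_env_insert: "ext b (env_insert k a M) = env_insert (Suc k) a (ext b M)"
  by (rule ext) (simp add: ext_def env_insert_def split: nat.split)

lemma env_insert_map_add: "env_insert k None (M1 ++ M2) = env_insert k None M1 ++ env_insert k None M2"
  by (rule ext) (simp add: env_insert_def map_add_def split: option.split)

lemma env_insert_empty [simp]: "env_insert k None Map.empty = Map.empty"
  by (rule ext) (simp add: env_insert_def)

lemma env_insert_singleton: "env_insert k None [x \<mapsto> t] = [(if x < k then x else Suc x) \<mapsto> t]"
  by (rule ext) (auto simp: env_insert_def)

lemma env_insert_shifted: "env_insert k a M (if x < k then x else Suc x) = M x"
  by (simp add: env_insert_def)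

lemma env_insert_disjoint:
  "dom M1 \<inter> dom M2 = {} \<Longrightarrow> dom (env_insert k None M1) \<inter> dom (env_insert k None M2) = {}"
  by (auto simp: env_insert_def dom_def split: if_splits)

lemma env_delete_ext_0: "env_delete 0 (ext a M) = M"
  by (rule ext) (simp add: ext_def env_delete_def)

lemma env_delete_ext: "env_delete (Suc k) (ext a M) = ext a (env_delete k M)"
  by (rule ext) (simp add: ext_def env_delete_def split: nat.split)

lemma env_delete_map_add: "env_delete k (M1 ++ M2) = env_delete k M1 ++ env_delete k M2"
  by (rule ext) (simp add: env_delete_def map_add_def)

lemma env_delete_empty [simp]: "env_delete k Map.empty = Map.empty"
  by (rule ext) (simp add: env_delete_def)

lemma env_delete_singleton:
  "env_delete k [x \<mapsto> t] = (if x = k then Map.empty else [(if x < k then x else x - 1) \<mapsto> t])"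
  by (rule ext) (auto simp: env_delete_def)

lemma env_delete_shifted: "x \<noteq> k \<Longrightarrow> env_delete k M (if x < k then x else x - 1) = M x"
  by (auto simp: env_delete_def)

lemma env_delete_disjoint:
  "dom M1 \<inter> dom M2 = {} \<Longrightarrow> dom (env_delete k M1) \<inter> dom (env_delete k M2) = {}"
  by (auto simp: env_delete_def dom_def split: if_splits)

lemma typing_lift: "typing G D e t \<Longrightarrow> typing (env_insert k a G) (env_insert k None D) (lift k e) t"
proof (induction arbitrary: k rule: typing.induct)
  case (var_nl G x t)
  then have "env_insert k a G (if x < k then x else Suc x) = Some t"
    by (simp only: env_insert_shifted)
  then show ?case by (cases "x < k") (auto intro: typing.var_nl)
next
  case (var_l G x t)
  then have "env_insert k a G (if x < k then x else Suc x) = None"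
    by (simp only: env_insert_shifted)
  then have "typing (env_insert k a G) [(if x < k then x else Suc x) \<mapsto> t]
      (Var (if x < k then x else Suc x)) t"
    by (rule typing.var_l)
  moreover have "lift k (Var x) = Var (if x < k then x else Suc x)" by simp
  ultimately show ?case by (simp only: env_insert_singleton)
next
  case (ifte G D e1 e2 t e3 D')
  then show ?case
    by (simp add: env_insert_map_add) (rule typing.ifte, auto simp: env_insert_disjoint)
next
  case (tens G D1 e1 t1 D2 e2 t2)
  then show ?case
    by (simp add: env_insert_map_add) (rule typing.tens, auto simp: env_insert_disjoint)
next
  case (lettens G t2 t1 D e t D' e')
  then show ?case
    by (simp add: env_insert_map_add)
      (rule typing.lettens, auto simp: env_insert_disjoint ext_env_insert)
next
  case (app_l G D e t' t D' e')
  then show ?case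
    by (simp add: env_insert_map_add) (rule typing.app_l, auto simp: env_insert_disjoint)
next
  case (bind_nl G e1 t1 D e2 t2)
  then show ?case by simp (rule typing.bind_nl, auto simp: ext_env_insert)
next
  case (bind_l G D e1 t1 D' e2 t2)
  then show ?case
    by (simp add: env_insert_map_add)
      (rule typing.bind_l, auto simp: env_insert_disjoint ext_env_insert)
qed (auto simp: ext_env_insert intro: typing.intros)

lemma typing_lift0: "typing G D e t \<Longrightarrow> typing (ext a G) (ext None D) (lift 0 e) t"
  using typing_lift[of G D e t 0 a] by (simp add: env_insert_0)

lemma typing_lift0_closed: "typing G Map.empty e t \<Longrightarrow> typing (ext a G) Map.empty (lift 0 e) t"
  using typing_lift0[of G Map.empty e t a] by simp

lemma typing_subst_nonlinear:
  "\<lbrakk> typing G D e t; D k = None; \<And>s. G k = Some s \<Longrightarrow> typing (env_delete k G) Map.empty e' s \<rbrakk>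
   \<Longrightarrow> typing (env_delete k G) (env_delete k D) (subst k e' e) t"
proof (induction arbitrary: k e' rule: typing.induct)
  case (var_nl G x t)
  show ?case
  proof (cases "x = k")
    case False
    then have "env_delete k G (if x < k then x else x - 1) = Some t"
      using var_nl env_delete_shifted[OF False, of G] by simp
    then show ?thesis using False by (auto intro: typing.var_nl)
  qed (use var_nl in simp)
next
  case (var_l G x t)
  then have "x \<noteq> k" by auto
  then have "env_delete k G (if x < k then x else x - 1) = None"
    using var_l env_delete_shifted[of x k G] by simp
  then have "typing (env_delete k G) [(if x < k then x else x - 1) \<mapsto> t]
      (Var (if x < k then x else x - 1)) t"
    by (rule typing.var_l)
  moreover have "subst k e' (Var x) = Var (if x < k then x else x - 1)"
    using \<open>x \<noteq> k\<close> by simp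
  ultimately show ?case using \<open>x \<noteq> k\<close> by (simp only: env_delete_singleton if_False)
next
  case (ifte G D e1 e2 t e3 D')
  then show ?case
    by (simp add: env_delete_map_add) (rule typing.ifte, auto simp: env_delete_disjoint)
next
  case (tens G D1 e1 t1 D2 e2 t2)
  then show ?case
    by (simp add: env_delete_map_add) (rule typing.tens, auto simp: env_delete_disjoint)
next
  case (lettens G t2 t1 D e t D' e'')
  have "typing (ext None (ext None (env_delete k G))) (ext (Some t2) (ext (Some t1) (env_delete k D)))
      (subst (Suc (Suc k)) (lift 0 (lift 0 e')) e) t"
    using lettens.IH(1)[of "Suc (Suc k)" "lift 0 (lift 0 e')"] lettens.prems
    by (auto simp: env_delete_ext intro!: typing_lift0_closed)
  with lettens show ?case
    by (simp add: env_delete_map_add) (rule typing.lettens, auto simp: env_delete_disjoint)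
next
  case (app_l G D e t' t D' e'')
  then show ?case
    by (simp add: env_delete_map_add) (rule typing.app_l, auto simp: env_delete_disjoint)
next
  case (bind_l G D e1 t1 D' e2 t2)
  have "typing (ext None (env_delete k G)) (ext (Some t1) (env_delete k D'))
      (subst (Suc k) (lift 0 e') e2) (TMon t2)"
    using bind_l.IH(2)[of "Suc k" "lift 0 e'"] bind_l.prems
    by (auto simp: env_delete_ext intro!: typing_lift0_closed)
  with bind_l show ?case
    by (simp add: env_delete_map_add) (rule typing.bind_l, auto simp: env_delete_disjoint)
next
  case (lam_nl t G D e t')
  then show ?case
    using lam_nl.IH[of "Suc k" "lift 0 e'"]
    by (auto simp: env_delete_ext intro!: typing.lam_nl typing_lift0_closed)
next
  case (lam_l G t D e t')
  then show ?case
    using lam_l.IH[of "Suc k" "lift 0 e'"]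
    by (auto simp: env_delete_ext intro!: typing.lam_l typing_lift0_closed)
next
  case (bind_nl G e1 t1 D e2 t2)
  have "typing (ext (Some t1) (env_delete k G)) (ext None (env_delete k D))
      (subst (Suc k) (lift 0 e') e2) (TMon t2)"
    using bind_nl.IH(2)[of "Suc k" "lift 0 e'"] bind_nl.prems
    by (auto simp: env_delete_ext intro!: typing_lift0_closed)
  with bind_nl show ?case by (auto intro!: typing.bind_nl)
qed (auto intro!: typing.intros)

lemma typing_subst_fresh:
  "\<lbrakk> typing G D e t; G k = None; D k = None \<rbrakk>
   \<Longrightarrow> typing (env_delete k G) (env_delete k D) (subst k e' e) t"
  by (rule typing_subst_nonlinear) simp_all

lemma linear_env_split [consumes 3, case_names left right]:
  assumes "dom D1 \<inter> dom D2 = {}" and "(D1 ++ D2) k = Some s"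
    and "dom (env_delete k (D1 ++ D2)) \<inter> dom D' = {}"
  obtains "D1 k = Some s" "D2 k = None" "dom (env_delete k D1) \<inter> dom D' = {}"
      "dom (env_delete k D1 ++ D') \<inter> dom (env_delete k D2) = {}"
      "env_delete k (D1 ++ D2) ++ D' = (env_delete k D1 ++ D') ++ env_delete k D2"
  | "D1 k = None" "D2 k = Some s" "dom (env_delete k D2) \<inter> dom D' = {}"
      "dom (env_delete k D1) \<inter> dom (env_delete k D2 ++ D') = {}"
      "env_delete k (D1 ++ D2) ++ D' = env_delete k D1 ++ (env_delete k D2 ++ D')"
proof -
  have disj: "dom (env_delete k D1) \<inter> dom (env_delete k D2) = {}"
    using assms(1) by (rule env_delete_disjoint)
  have disj1: "dom (env_delete k D1) \<inter> dom D' = {}" and disj2: "dom (env_delete k D2) \<inter> dom D' = {}"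
    using assms(3) by (auto simp: env_delete_map_add)
  show thesis
  proof (cases "D2 k")
    case None
    have "D' ++ env_delete k D2 = env_delete k D2 ++ D'"
      by (rule map_add_comm) (use disj2 in blast)
    then have "env_delete k (D1 ++ D2) ++ D' = (env_delete k D1 ++ D') ++ env_delete k D2"
      by (simp only: env_delete_map_add map_add_assoc[symmetric])
    moreover have "D1 k = Some s"
      using None assms(2) by (simp add: map_add_def)
    ultimately show thesis
      using None disj disj1 disj2 by (intro that(1)) auto
  next
    case (Some s')
    then show thesis
      using assms(1,2) disj disj1 disj2 by (intro that(2)) (auto simp: env_delete_map_add)
  qed
qed

lemma typing_subst_linear:
  "\<lbrakk> typing G D e t; G k = None; D k = Some s; typing (env_delete k G) D' e' s;
     dom (env_delete k D) \<inter> dom D' = {} \<rbrakk>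
   \<Longrightarrow> typing (env_delete k G) (env_delete k D ++ D') (subst k e' e) t"
proof (induction arbitrary: k e' D' rule: typing.induct)
  case (var_l G x t)
  then have "x = k" "t = s" by (auto split: if_splits)
  moreover have "env_delete k [k \<mapsto> t] = Map.empty"
    by (rule ext) (simp add: env_delete_def)
  ultimately show ?case
    using var_l.prems(3) by (simp only: subst.simps less_irrefl simp_thms if_False if_True empty_map_add)
next
  case (ifte G D1 e1 D2 e2 t e3)
  from ifte.hyps(4) ifte.prems(2,4) show ?case
    by (cases rule: linear_env_split) (simp_all only: subst.simps,
      (rule typing.ifte; use ifte in \<open>auto intro: typing_subst_fresh\<close>)+)
next
  case (tens G D1 e1 t1 D2 e2 t2)
  from tens.hyps(3) tens.prems(2,4) show ?case
    by (cases rule: linear_env_split) (simp_all only: subst.simps,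
      (rule typing.tens; use tens in \<open>auto intro: typing_subst_fresh\<close>)+)
next
  case (app_l G D1 e1 t' t D2 e2)
  from app_l.hyps(3) app_l.prems(2,4) show ?case
    by (cases rule: linear_env_split) (simp_all only: subst.simps,
      (rule typing.app_l; use app_l in \<open>auto intro: typing_subst_fresh\<close>)+)
next
  case (lettens G t2 t1 D1 e t D2 e2)
  from lettens.hyps(3) lettens.prems(2,4) show ?case
  proof (cases rule: linear_env_split)
    case left
    have "typing (ext None (ext None (env_delete k G))) (ext (Some t2) (ext (Some t1) (env_delete k D1 ++ D')))
       (subst (Suc (Suc k)) (lift 0 (lift 0 e')) e) t"
      using lettens.IH(1)[of "Suc (Suc k)" "ext None (ext None D')" "lift 0 (lift 0 e')"]
        lettens.prems(1,3) left
      by (simp add: env_delete_ext dom_ext_disjoint_iff ext_map_add typing_lift0)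
    then show ?thesis
      using lettens.hyps(2) lettens.prems(1) left
      by (simp only: left(5) subst.simps) (rule typing.lettens; auto intro: typing_subst_fresh)
  next
    case right
    have "typing (ext None (ext None (env_delete k G))) (ext (Some t2) (ext (Some t1) (env_delete k D1)))
       (subst (Suc (Suc k)) (lift 0 (lift 0 e')) e) t"
      using typing_subst_nonlinear[OF lettens.hyps(1), of "Suc (Suc k)"] lettens.prems(1) right
      by (simp add: env_delete_ext)
    then show ?thesis
      using lettens.IH(2) lettens.prems(1,3) right
      by (simp only: right(5) subst.simps) (rule typing.lettens; auto)
  qed
next
  case (bind_l G D1 e1 t1 D2 e2 t2)
  from bind_l.hyps(3) bind_l.prems(2,4) show ?case
  proof (cases rule: linear_env_split)
    case left
    have "typing (ext None (env_delete k G)) (ext (Some t1) (env_delete k D2))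
        (subst (Suc k) (lift 0 e') e2) (TMon t2)"
      using typing_subst_nonlinear[OF bind_l.hyps(2), of "Suc k"] bind_l.prems(1) left
      by (simp add: env_delete_ext)
    then show ?thesis
      using bind_l.IH(1) bind_l.prems(1,3) left
      by (simp only: left(5) subst.simps) (rule typing.bind_l; auto)
  next
    case right
    have "typing (ext None (env_delete k G)) (ext (Some t1) (env_delete k D2 ++ D'))
        (subst (Suc k) (lift 0 e') e2) (TMon t2)"
      using bind_l.IH(2)[of "Suc k" "ext None D'" "lift 0 e'"] bind_l.prems(1,3) right
      by (simp add: env_delete_ext dom_ext_disjoint_iff ext_map_add typing_lift0)
    then show ?thesis
      using bind_l.hyps(1) bind_l.prems(1) right
      by (simp only: right(5) subst.simps) (rule typing.bind_l; auto intro: typing_subst_fresh)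
  qed
next
  case (lam_nl t G D e t')
  have "typing (ext (Some t) (env_delete k G)) (ext None (env_delete k D ++ D'))
      (subst (Suc k) (lift 0 e') e) t'"
    using lam_nl.IH[of "Suc k" "ext None D'" "lift 0 e'"] lam_nl.prems
    by (simp add: env_delete_ext dom_ext_disjoint_iff ext_map_add typing_lift0)
  then show ?case by (auto intro: typing.lam_nl)
next
  case (lam_l G t D e t')
  have "typing (ext None (env_delete k G)) (ext (Some t) (env_delete k D ++ D'))
      (subst (Suc k) (lift 0 e') e) t'"
    using lam_l.IH[of "Suc k" "ext None D'" "lift 0 e'"] lam_l.prems
    by (simp add: env_delete_ext dom_ext_disjoint_iff ext_map_add typing_lift0)
  then show ?case by (auto intro: typing.lam_l)
next
  case (bind_nl G e1 t1 D e2 t2)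
  have "typing (ext (Some t1) (env_delete k G)) (ext None (env_delete k D ++ D'))
      (subst (Suc k) (lift 0 e') e2) (TMon t2)"
    using bind_nl.IH(2)[of "Suc k" "ext None D'" "lift 0 e'"] bind_nl.prems
    by (simp add: env_delete_ext dom_ext_disjoint_iff ext_map_add typing_lift0)
  with typing_subst_fresh[OF bind_nl.hyps(1) bind_nl.prems(1)] show ?case
    by (auto intro: typing.bind_nl)
next
  case (app_nl G D e t' t e2)
  show ?case
    using app_nl.IH(1)[OF app_nl.prems] typing_subst_fresh[OF app_nl.hyps(2) app_nl.prems(1)]
    by (auto intro: typing.app_nl)
qed (auto intro: typing.intros)

lemma typing_subst0_nonlinear:
  "\<lbrakk> typing (ext (Some t') G) (ext None D) e t; typing G Map.empty e' t' \<rbrakk>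
   \<Longrightarrow> typing G D (subst 0 e' e) t"
  using typing_subst_nonlinear[where k = 0] by (fastforce simp: env_delete_ext_0)

lemma typing_subst0_linear:
  "\<lbrakk> typing (ext None G) (ext (Some t') D) e t; typing G D' e' t'; dom D \<inter> dom D' = {} \<rbrakk>
   \<Longrightarrow> typing G (D ++ D') (subst 0 e' e) t"
  using typing_subst_linear[where k = 0] by (fastforce simp: env_delete_ext_0)

inductive_cases typing_AppE: "typing G D (App e1 e2) t"
inductive_cases typing_LamE: "typing G D (Lam e) t"
inductive_cases typing_FixE: "typing G D (Fix t') t"
inductive_cases typing_SuccE: "typing G D Succ t"
inductive_cases typing_PredE: "typing G D Pred t"
inductive_cases typing_IsZeroE: "typing G D IsZero t"
inductive_cases typing_NumE: "typing G D (Num n) t"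
inductive_cases typing_TTE: "typing G D TT t"
inductive_cases typing_FFE: "typing G D FF t"
inductive_cases typing_IfE: "typing G D (If e1 e2 e3) t"
inductive_cases typing_PairE: "typing G D (Pair e1 e2) t"
inductive_cases typing_Proj1E: "typing G D (Proj1 e) t"
inductive_cases typing_Proj2E: "typing G D (Proj2 e) t"
inductive_cases typing_TensE: "typing G D (Tens e1 e2) t"
inductive_cases typing_LetTensE: "typing G D (LetTens e1 e2) t"
inductive_cases typing_ValE: "typing G D (Val e) t"
inductive_cases typing_BindE: "typing G D (Bind e1 e2) t"
inductive_cases typing_ChoiceE: "typing G D (Choice e1 e2) t"

lemma typing_beta_reduct: "typing G D (App (Lam e) e') t \<Longrightarrow> typing G D (subst 0 e' e) t"
  by (auto elim!: typing_AppE typing_LamE intro: typing_subst0_nonlinear typing_subst0_linear)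

lemma typing_let_tensor_reduct:
  assumes "typing G D (LetTens (Tens e1 e2) e) t"
  shows "typing G D (subst 0 e2 (subst 1 (lift 0 e1) e)) t"
proof -
  from assms obtain t1 t2 D0 D1 D2
    where body: "typing (ext None (ext None G)) (ext (Some t2) (ext (Some t1) D0)) e t"
      and e1: "typing G D1 e1 t1" and e2: "typing G D2 e2 t2"
      and disjoint: "dom D0 \<inter> dom (D1 ++ D2) = {}" "dom D1 \<inter> dom D2 = {}"
      and D: "D = D0 ++ (D1 ++ D2)"
    by (elim typing_LetTensE typing_TensE) auto
  have "typing (ext None G) (ext (Some t2) D0 ++ ext None D1) (subst 1 (lift 0 e1) e) t"
    using typing_subst_linear[OF body, of 1 t1 "ext None D1" "lift 0 e1"] typing_lift0[OF e1] disjoint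
    by (auto simp: One_nat_def env_delete_ext env_delete_ext_0 dom_ext_disjoint_iff)
  then have "typing G ((D0 ++ D1) ++ D2) (subst 0 e2 (subst 1 (lift 0 e1) e)) t"
    using e2 disjoint by (intro typing_subst0_linear) (auto simp: ext_map_add)
  with D show ?thesis by simp
qed

lemma typing_bind_val_reduct:
  assumes "typing G D (Bind (Val e') e) t"
  shows "typing G D (App (Lam e) e') t"
proof -
  from assms consider
      (nonlinear) t1 t2 where "t = TMon t2" "typing G Map.empty e' t1"
        "typing (ext (Some t1) G) (ext None D) e (TMon t2)"
    | (linear) D1 D2 t1 t2 where "D = D1 ++ D2" "t = TMon t2" "typing G D1 e' t1"
        "typing (ext None G) (ext (Some t1) D2) e (TMon t2)" "dom D1 \<inter> dom D2 = {}"
    by (elim typing_BindE typing_ValE) blast+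
  then show ?thesis
  proof cases
    case nonlinear
    then show ?thesis by (auto intro: typing.lam_nl typing.app_nl)
  next
    case linear
    then have "typing G (D2 ++ D1) (App (Lam e) e') t"
      by (auto intro: typing.lam_l typing.app_l)
    with linear show ?thesis by (metis map_add_comm)
  qed
qed

lemma typing_plug:
  assumes "\<And>G D t. typing G D e1 t \<Longrightarrow> typing G D e2 t"
  shows "typing G D (plug E e1) t \<Longrightarrow> typing G D (plug E e2) t"
  by (induction E arbitrary: G D t)
    (auto simp: assms elim!: typing_AppE typing_IfE typing_Proj1E typing_Proj2E typing_LetTensE
      typing_BindE typing_ValE intro: typing.app_nl typing.app_l typing.ifte typing.proj1
      typing.proj2 typing.lettens typing.bind_nl typing.bind_l typing.val)

lemma red_with_preserves_typing: "red_with R e e' \<Longrightarrow> typing G D e t \<Longrightarrow> typing G D e' t"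
proof (induction arbitrary: G D t rule: red_with.induct)
  case beta
  then show ?case by (rule typing_beta_reduct)
next
  case fixT
  then show ?case by (auto elim!: typing_AppE typing_FixE intro!: typing.app_nl typing.fixT)
next
  case lettens
  then show ?case by (rule typing_let_tensor_reduct)
next
  case bind
  then show ?case by (blast intro: typing_bind_val_reduct)
next
  case ctx
  then show ?case using typing_plug by blast
qed (auto elim!: typing_AppE typing_SuccE typing_PredE typing_IsZeroE typing_NumE
    typing_IfE typing_TTE typing_FFE typing_Proj1E typing_Proj2E typing_PairE typing_ChoiceE
    intro: typing.num typing.tt typing.ff)

theorem proposition5:
  assumes "typing G D e t"
      and "step e e'"
  shows "typing G D e' t"
proof -
  from assms(2) have "red_with (\<lambda>a b. if size a < size e then step a b else False) e e'"
    by simp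
  then show ?thesis using assms(1) by (rule red_with_preserves_typing)
qed

end
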